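(* Let $A$ and $B$ be weighted geometric mean closed Archimedean $\Phi$-algebras over $\mathbb{K}$ with unit elements $e$ and $e'$ respectively. Let $C$ be a $\Phi$-subalgebra of $A$ and let $T\colon C\to B$ be a multiplicative vector lattice homomorphism with $T(e)=e'$. Let $a\in A^+$ and $r\in(0,\infty)$. If $a\in C$ and $a^r\in C$, then $T(a^r)=\bigl(T(a)\bigr)^r$.
   Context: $\mathbb{K}$ denotes $\mathbb{R}$ or $\mathbb{C}$. An Archimedean vector lattice over $\mathbb{C}$ is $E+iE$ where $E$ is an Archimedean real vector lattice in which $\sup\{(\cos\theta)f+(\sin\theta)g:\theta\in[0,2\pi]\}$ exists for all $f,g$, with modulus $|f+ig|$ equal to that supremum; over $\mathbb{R}$ it is an Archimedean real vector lattice. $A^+=\{a:|a|=a\}$, $A_\rho=A^+-A^+$ with its real lattice order. An Archimedean $\Phi$-algebra over $\mathbb{K}$: $A_\rho$ is an $f$-algebra with multiplicative identity (multiplication extended complex-bilinearly in the complex case); a $\Phi$-subalgebra is a subalgebra and vector sublattice containing the unit. $A$ is weighted geometric mean closed if for all $f_1,\dots,f_n\in A$, $r_k\in(0,1)$ with $\sum r_k=1$, $\triangle_{k=1}^n(f_k,r_k):=\inf\{\sum r_k\theta_k|f_k|:\theta_k>0,\ \prod\theta_k^{r_k}=1\}$ exists in $A$. For $a\in A^+$ and $r\in(0,\infty)$, with $\lfloor r\rfloor=\max\{n\in\mathbb{N}\cup\{0\}:n\le r\}$ and $\tilde r=r-\lfloor r\rfloor$, define $a^r=a^{\lfloor r\rfloor}\inf\{\tilde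 r\theta_1a+(1-\tilde r)\theta_2e:\theta_1,\theta_2\in(0,\infty),\ \theta_1^{\tilde r}\theta_2^{1-\tilde r}=1\}$, where $a^{0}=e$ and the infimum is taken to be $e$ when $\tilde r=0$ (so $a^r$ is the ordinary power for integer $r$). $T$ multiplicative means $T(ab)=T(a)T(b)$; vector lattice homomorphism means linear with $|T(f)|=T(|f|)$. *)

theory Defs
  imports Complex_Main "HOL-Library.Lattice_Algebras"
begin

text \<open>
An Archimedean Phi-algebra over K (K = R or C) is represented through its
real part E = A_rho, a type of class real_algebra_1 / lattice / ordered real vector
space.  Elements of the algebra A over K are pairs (x, y) of E, read as x + i y;
over R the imaginary part is required to be 0.  Operations are the complex-style
ones; the modulus over C is the supremum sup{cos t x + sin t y : t in [0, 2 pi]}.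
\<close>

datatype scalar_field = RealK | ComplexK

type_synonym 'a cpx = "'a \<times> 'a"

definition is_sup_E :: "'a::order set \<Rightarrow> 'a \<Rightarrow> bool" where
  "is_sup_E S s \<longleftrightarrow> (\<forall>x\<in>S. x \<le> s) \<and> (\<forall>u. (\<forall>x\<in>S. x \<le> u) \<longrightarrow> s \<le> u)"

definition inA :: "scalar_field \<Rightarrow> 'a::zero cpx \<Rightarrow> bool" where
  "inA K f \<longleftrightarrow> (K = RealK \<longrightarrow> snd f = 0)"

definition scalars :: "scalar_field \<Rightarrow> complex set" where
  "scalars K = (if K = RealK then range complex_of_real else UNIV)"

definition addA :: "'a::ab_group_add cpx \<Rightarrow> 'a cpx \<Rightarrow> 'a cpx" where
  "addA f g = (fst f + fst g, snd f + snd g)"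

definition subA :: "'a::ab_group_add cpx \<Rightarrow> 'a cpx \<Rightarrow> 'a cpx" where
  "subA f g = (fst f - fst g, snd f - snd g)"

definition smulA :: "complex \<Rightarrow> 'a::real_vector cpx \<Rightarrow> 'a cpx" where
  "smulA c f = (Re c *\<^sub>R fst f - Im c *\<^sub>R snd f, Re c *\<^sub>R snd f + Im c *\<^sub>R fst f)"

definition mulA :: "'a::ring cpx \<Rightarrow> 'a cpx \<Rightarrow> 'a cpx" where
  "mulA f g = (fst f * fst g - snd f * snd g, fst f * snd g + snd f * fst g)"

definition unitA :: "'a::{zero,one} cpx" where
  "unitA = (1, 0)"

definition powA_nat :: "'a::ring_1 cpx \<Rightarrow> nat \<Rightarrow> 'a cpx" where
  "powA_nat f n = (mulA f ^^ n) unitA"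

definition sumA :: "(nat \<Rightarrow> 'a::ab_group_add cpx) \<Rightarrow> nat \<Rightarrow> 'a cpx" where
  "sumA F n = ((\<Sum>k<n. fst (F k)), (\<Sum>k<n. snd (F k)))"

definition modA :: "scalar_field \<Rightarrow> 'a::{real_vector, lattice_ab_group_add} cpx \<Rightarrow> 'a cpx" where
  "modA K f = (if K = RealK then (sup (fst f) (- fst f), 0)
     else (THE s. is_sup_E {cos t *\<^sub>R fst f + sin t *\<^sub>R snd f | t. 0 \<le> t \<and> t \<le> 2 * pi} s, 0))"

definition posA :: "scalar_field \<Rightarrow> 'a::{real_vector, lattice_ab_group_add} cpx set" where
  "posA K = {a. inA K a \<and> modA K a = a}"

definition leA :: "scalar_field \<Rightarrow> 'a::{real_vector, lattice_ab_group_add} cpx \<Rightarrow> 'a cpx \<Rightarrow> bool" where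
  "leA K f g \<longleftrightarrow> subA g f \<in> posA K"

definition is_infA :: "scalar_field \<Rightarrow> 'a::{real_vector, lattice_ab_group_add} cpx set \<Rightarrow> 'a cpx \<Rightarrow> bool" where
  "is_infA K S s \<longleftrightarrow> inA K s \<and> (\<forall>x\<in>S. leA K s x) \<and>
     (\<forall>l. inA K l \<and> (\<forall>x\<in>S. leA K l x) \<longrightarrow> leA K l s)"

definition infA :: "scalar_field \<Rightarrow> 'a::{real_vector, lattice_ab_group_add} cpx set \<Rightarrow> 'a cpx" where
  "infA K S = (THE s. is_infA K S s)"

text \<open>Archimedean Phi-algebra over K: A_rho = E is an Archimedean f-algebra with unit
(the unit being the 1 of the ring structure); over C in addition the suprema defining
the modulus exist.\<close>
definition Phi_algebra :: "scalar_field \<Rightarrow> 'a::{real_algebra_1, lattice_ab_group_add, ordered_real_vector} itself \<Rightarrow> bool" where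
  "Phi_algebra K _ \<longleftrightarrow>
     (\<forall>a b::'a. 0 \<le> a \<longrightarrow> 0 \<le> b \<longrightarrow> 0 \<le> a * b) \<and>
     (\<forall>a b c::'a. inf a b = 0 \<longrightarrow> 0 \<le> c \<longrightarrow> inf (a * c) b = 0 \<and> inf (c * a) b = 0) \<and>
     (\<forall>x y::'a. (\<forall>n::nat. real n *\<^sub>R x \<le> y) \<longrightarrow> x \<le> 0) \<and>
     (K = ComplexK \<longrightarrow> (\<forall>f g::'a. \<exists>s. is_sup_E {cos t *\<^sub>R f + sin t *\<^sub>R g | t. 0 \<le> t \<and> t \<le> 2 * pi} s))"

definition wgm_closed :: "scalar_field \<Rightarrow> 'a::{real_algebra_1, lattice_ab_group_add, ordered_real_vector} itself \<Rightarrow> bool" where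
  "wgm_closed K _ \<longleftrightarrow>
     (\<forall>(n::nat) (f::nat \<Rightarrow> 'a cpx) (r::nat \<Rightarrow> real).
        (\<forall>k<n. inA K (f k)) \<and> (\<forall>k<n. 0 < r k \<and> r k < 1) \<and> (\<Sum>k<n. r k) = 1 \<longrightarrow>
        (\<exists>s. is_infA K {sumA (\<lambda>k. smulA (complex_of_real (r k * \<theta> k)) (modA K (f k))) n | \<theta>.
                          (\<forall>k<n. 0 < \<theta> k) \<and> (\<Prod>k<n. \<theta> k powr r k) = 1} s))"

definition powA :: "scalar_field \<Rightarrow> 'a::{real_algebra_1, lattice_ab_group_add, ordered_real_vector} cpx \<Rightarrow> real \<Rightarrow> 'a cpx" where
  "powA K a r =
     (let n = nat \<lfloor>r\<rfloor>; s = r - of_int \<lfloor>r\<rfloor> in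
      mulA (powA_nat a n)
        (if s = 0 then unitA
         else infA K {addA (smulA (complex_of_real (s * \<theta>1)) a)
                           (smulA (complex_of_real ((1 - s) * \<theta>2)) unitA) | \<theta>1 \<theta>2.
                      0 < \<theta>1 \<and> 0 < \<theta>2 \<and> \<theta>1 powr s * \<theta>2 powr (1 - s) = 1}))"

definition Phi_subalgebra :: "scalar_field \<Rightarrow> 'a::{real_algebra_1, lattice_ab_group_add, ordered_real_vector} cpx set \<Rightarrow> bool" where
  "Phi_subalgebra K C \<longleftrightarrow>
     (\<forall>f\<in>C. inA K f) \<and> (0, 0) \<in> C \<and> unitA \<in> C \<and>
     (\<forall>f\<in>C. \<forall>g\<in>C. addA f g \<in> C \<and> mulA f g \<in> C) \<and>
     (\<forall>c\<in>scalars K. \<forall>f\<in>C. smulA c f \<in> C) \<and>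
     (\<forall>f\<in>C. (fst f, 0) \<in> C \<and> (snd f, 0) \<in> C) \<and>
     (\<forall>x y. (x, 0) \<in> C \<longrightarrow> (y, 0) \<in> C \<longrightarrow> (sup x y, 0) \<in> C \<and> (inf x y, 0) \<in> C)"

definition mult_vl_hom :: "scalar_field \<Rightarrow> 'a::{real_algebra_1, lattice_ab_group_add, ordered_real_vector} cpx set
    \<Rightarrow> ('a cpx \<Rightarrow> 'b::{real_algebra_1, lattice_ab_group_add, ordered_real_vector} cpx) \<Rightarrow> bool" where
  "mult_vl_hom K C T \<longleftrightarrow>
     (\<forall>f\<in>C. inA K (T f)) \<and>
     (\<forall>f\<in>C. \<forall>g\<in>C. T (addA f g) = addA (T f) (T g)) \<and>
     (\<forall>c\<in>scalars K. \<forall>f\<in>C. T (smulA c f) = smulA c (T f)) \<and>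
     (\<forall>f\<in>C. modA K (T f) = T (modA K f)) \<and>
     (\<forall>f\<in>C. \<forall>g\<in>C. T (mulA f g) = mulA (T f) (T g))"

end

theory Submission
  imports Defs
begin

text \<open>Write a = x and r = n + s with n integer and 0 < s < 1. Then a^r = x^n g, where g is
  the infimum of the weighted means s t x + (1 - s) t^(s/(s-1)) e over t > 0. Sampling t on a
  grid of mesh \<epsilon> shows that this infimum, and hence x^n g, is approached from above up to
  \<epsilon> x^n (x + e) by finite infima. A multiplicative lattice homomorphism preserves finite
  infima and the order, so T(a^r) is approached in the same way by the finite infima of the
  corresponding set for T x; by the Archimedean property it is therefore its infimum, which
  is (T x)^r.\<close>

lemma sup_uminus_nonneg: "0 \<le> sup (x::'e::lattice_ab_group_add) (- x)"
proof -
  have "0 \<le> sup x (- x) + sup x (- x)"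
    using add_mono[OF sup_ge1[of x "- x"] sup_ge2[of "- x" x]] by simp
  then show ?thesis by simp
qed

lemma sup_uminus_eq_self: "0 \<le> (x::'e::lattice_ab_group_add) \<Longrightarrow> sup x (- x) = x"
  by (meson dual_order.trans neg_le_0_iff_le sup_absorb1)

lemma sup_uminus_eq_sup_zero_minus_inf_zero: "sup (a::'e::lattice_ab_group_add) (- a) = sup a 0 - inf a 0"
  using sup_absorb1[OF sup_uminus_nonneg[of a]] by (simp add: add_sup_inf_distribs ac_simps)

lemma sup_zero_add_sup_zero: "sup (a::'e::lattice_ab_group_add) 0 + sup a 0 = a + sup a (- a)"
proof -
  have "a = sup a 0 + inf a 0" using prts[of a] by (simp add: pprt_def nprt_def)
  then show ?thesis
    using sup_uminus_eq_sup_zero_minus_inf_zero[of a] by (metis add.assoc add.commute diff_add_cancel)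
qed

lemma add_self_eq_add_self_imp_eq: "(a::'e::lattice_ab_group_add) + a = b + b \<Longrightarrow> a = b"
proof -
  assume "a + a = b + b"
  then have "(a - b) + (a - b) = 0" by (simp add: algebra_simps)
  then show ?thesis by simp
qed

lemma inf_eq_minus_sup_diff_zero: "inf (p::'e::lattice_ab_group_add) q = p - sup (p - q) 0"
  by (simp add: diff_sup_eq_inf add_inf_distrib_left inf_commute)

lemma inf_sup_zero_sup_uminus_zero: "inf (sup (x::'e::lattice_ab_group_add) 0) (sup (- x) 0) = 0"
proof -
  let ?u = "sup x 0" and ?v = "sup (- x) 0"
  have "?u + ?v = sup ?u ?v + inf ?u ?v" by (rule add_eq_inf_sup)
  moreover have "?u + ?v = sup x (- x)"
    using sup_uminus_eq_sup_zero_minus_inf_zero[of x] by (simp add: neg_inf_eq_sup[symmetric])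
  moreover have "sup ?u ?v = sup x (- x)"
    using sup_uminus_nonneg[of x] by (metis sup_absorb1 sup_assoc sup_commute sup_left_idem)
  ultimately show ?thesis by simp
qed

definition archimedean_f_algebra :: "'e::{real_algebra_1, lattice_ab_group_add, ordered_real_vector} itself \<Rightarrow> bool" where
  "archimedean_f_algebra _ \<longleftrightarrow>
     (\<forall>a b::'e. 0 \<le> a \<longrightarrow> 0 \<le> b \<longrightarrow> 0 \<le> a * b) \<and>
     (\<forall>a b c::'e. inf a b = 0 \<longrightarrow> 0 \<le> c \<longrightarrow> inf (a * c) b = 0 \<and> inf (c * a) b = 0) \<and>
     (\<forall>x y::'e. (\<forall>n::nat. real n *\<^sub>R x \<le> y) \<longrightarrow> x \<le> 0)"

lemma Phi_algebra_imp_archimedean_f_algebra: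
  "Phi_algebra K TYPE('e::{real_algebra_1, lattice_ab_group_add, ordered_real_vector}) \<Longrightarrow>
    archimedean_f_algebra TYPE('e)"
  unfolding Phi_algebra_def archimedean_f_algebra_def by blast

context
  assumes F: "archimedean_f_algebra TYPE('e::{real_algebra_1, lattice_ab_group_add, ordered_real_vector})"
begin

lemma f_algebra_mult_nonneg: "0 \<le> a \<Longrightarrow> 0 \<le> b \<Longrightarrow> 0 \<le> (a::'e) * b"
  using F unfolding archimedean_f_algebra_def by blast

lemma f_algebra_inf_mult_left: "inf a b = 0 \<Longrightarrow> 0 \<le> c \<Longrightarrow> inf (c * a) (b::'e) = 0"
  using F unfolding archimedean_f_algebra_def by blast

lemma f_algebra_inf_mult_right: "inf a b = 0 \<Longrightarrow> 0 \<le> c \<Longrightarrow> inf (a * c) (b::'e) = 0"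
  using F unfolding archimedean_f_algebra_def by blast

lemma f_algebra_archimedean: "(\<And>n::nat. real n *\<^sub>R x \<le> y) \<Longrightarrow> (x::'e) \<le> 0"
  using F unfolding archimedean_f_algebra_def by blast

lemma f_algebra_mult_left_mono: "0 \<le> c \<Longrightarrow> p \<le> q \<Longrightarrow> c * p \<le> (c::'e) * q"
  using f_algebra_mult_nonneg[of c "q - p"] by (simp add: right_diff_distrib)

lemma f_algebra_mult_inf_left:
  fixes c p q :: 'e
  assumes c: "0 \<le> c"
  shows "c * inf p q = inf (c * p) (c * q)"
proof -
  let ?m = "inf p q"
  have "inf (p - ?m) (q - ?m) = 0"
    unfolding diff_conv_add_uminus add_inf_distrib_right[symmetric] by (rule right_minus)
  then have "inf (c * (p - ?m)) (q - ?m) = 0" by (rule f_algebra_inf_mult_left[OF _ c])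
  then have "inf (q - ?m) (c * (p - ?m)) = 0" by (simp add: inf_commute)
  then have "inf (c * (q - ?m)) (c * (p - ?m)) = 0" by (rule f_algebra_inf_mult_left[OF _ c])
  then have "inf (c * q - c * ?m) (c * p - c * ?m) = 0" by (simp only: right_diff_distrib)
  then have "inf (c * q) (c * p) - c * ?m = 0"
    unfolding diff_conv_add_uminus add_inf_distrib_right .
  then show ?thesis by (simp add: inf_commute)
qed

text \<open>The negative part n of 1 is disjoint from the positive part p, so n p = 0 and
  n = n (p - n) = - n n \<le> 0.\<close>
lemma f_algebra_one_nonneg: "0 \<le> (1::'e)"
proof -
  let ?p = "sup (1::'e) 0" and ?n = "sup (- (1::'e)) 0"
  have n0: "0 \<le> ?n" by simp
  have "inf ?n (?n * ?p) = 0"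
    using f_algebra_inf_mult_left[OF inf_sup_zero_sup_uminus_zero n0] by (simp add: inf_commute)
  then have "inf (?n * ?p) (?n * ?p) = 0" by (rule f_algebra_inf_mult_right) simp
  then have np: "?n * ?p = 0" by simp
  have one: "(1::'e) = ?p - ?n"
    using prts[of "1::'e"] by (simp add: pprt_def nprt_def neg_inf_eq_sup[symmetric])
  have "?n = ?n * (?p - ?n)" by (subst one[symmetric]) (rule mult_1_right[symmetric])
  also have "\<dots> = - (?n * ?n)" using np by (simp only: right_diff_distrib diff_0)
  finally have "?n \<le> 0" using f_algebra_mult_nonneg[OF n0 n0] by (metis neg_le_0_iff_le)
  then have "?n = 0" using n0 by (rule antisym)
  then show ?thesis using one by (metis diff_zero sup_ge2)
qed

lemma f_algebra_power_nonneg: "0 \<le> (x::'e) \<Longrightarrow> 0 \<le> x ^ n"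
  by (induction n) (auto simp: f_algebra_one_nonneg f_algebra_mult_nonneg)

lemma f_algebra_le_of_le_add_scaleR:
  fixes w p z :: 'e
  assumes le: "\<And>\<epsilon>. 0 < \<epsilon> \<Longrightarrow> w \<le> p + \<epsilon> *\<^sub>R z"
  shows "w \<le> p"
proof -
  have "w - p \<le> 0"
  proof (rule f_algebra_archimedean)
    fix n :: nat
    show "real n *\<^sub>R (w - p) \<le> sup z 0"
    proof (cases "n = 0")
      case False
      then have n: "0 < real n" by simp
      have "w - p \<le> (1 / real n) *\<^sub>R z" using le[of "1 / real n"] n by (simp add: algebra_simps)
      then have "real n *\<^sub>R (w - p) \<le> real n *\<^sub>R ((1 / real n) *\<^sub>R z)"
        by (rule scaleR_left_mono) simp
      then show ?thesis using n by (simp add: le_supI1)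
    qed simp
  qed
  then show ?thesis by simp
qed

end

definition is_glb :: "'a::order set \<Rightarrow> 'a \<Rightarrow> bool" where
  "is_glb S g \<longleftrightarrow> (\<forall>y\<in>S. g \<le> y) \<and> (\<forall>l. (\<forall>y\<in>S. l \<le> y) \<longrightarrow> l \<le> g)"

lemma is_glb_unique: "is_glb S g \<Longrightarrow> is_glb S h \<Longrightarrow> g = h"
  unfolding is_glb_def by (meson order_antisym)

definition approx_Inf_fin :: "'e::{lattice, real_vector} set \<Rightarrow> 'e \<Rightarrow> 'e \<Rightarrow> bool" where
  "approx_Inf_fin S g z \<longleftrightarrow> (\<forall>y\<in>S. g \<le> y) \<and>
     (\<forall>\<epsilon>>0. \<exists>F. finite F \<and> F \<noteq> {} \<and> F \<subseteq> S \<and> Inf_fin F \<le> g + \<epsilon> *\<^sub>R z)"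

lemma approx_Inf_finE:
  assumes "approx_Inf_fin S g z" and "0 < \<epsilon>"
  obtains F where "finite F" "F \<noteq> {}" "F \<subseteq> S" "Inf_fin F \<le> g + \<epsilon> *\<^sub>R z"
  using assms unfolding approx_Inf_fin_def by blast

lemma approx_Inf_fin_imp_is_glb:
  fixes S :: "'e::{real_algebra_1, lattice_ab_group_add, ordered_real_vector} set"
  assumes F: "archimedean_f_algebra TYPE('e)" and approx: "approx_Inf_fin S g z"
  shows "is_glb S g"
  unfolding is_glb_def
proof (intro conjI allI impI)
  show "\<forall>y\<in>S. g \<le> y" using approx by (simp add: approx_Inf_fin_def)
  fix l assume l: "\<forall>y\<in>S. l \<le> y"
  show "l \<le> g"
  proof (rule f_algebra_le_of_le_add_scaleR[OF F])
    fix \<epsilon> :: real assume "0 < \<epsilon>"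
    with approx obtain G where "finite G" "G \<noteq> {}" "G \<subseteq> S" "Inf_fin G \<le> g + \<epsilon> *\<^sub>R z"
      by (rule approx_Inf_finE)
    then show "l \<le> g + \<epsilon> *\<^sub>R z" using l by (meson Inf_fin.boundedI order_trans subsetD)
  qed
qed

lemma approx_Inf_fin_mult_left:
  fixes S :: "'e::{real_algebra_1, lattice_ab_group_add, ordered_real_vector} set"
  assumes F: "archimedean_f_algebra TYPE('e)" and w: "0 \<le> w" and approx: "approx_Inf_fin S g z"
  shows "approx_Inf_fin ((*) w ` S) (w * g) (w * z)"
  unfolding approx_Inf_fin_def
proof (intro conjI allI impI)
  show "\<forall>y\<in>(*) w ` S. w * g \<le> y"
    using approx f_algebra_mult_left_mono[OF F w] by (auto simp: approx_Inf_fin_def)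
  fix \<epsilon> :: real assume "0 < \<epsilon>"
  with approx obtain G where G: "finite G" "G \<noteq> {}" "G \<subseteq> S" and le: "Inf_fin G \<le> g + \<epsilon> *\<^sub>R z"
    by (rule approx_Inf_finE)
  have "Inf_fin ((*) w ` G) = w * Inf_fin G"
    by (rule Inf_fin.hom_commute[where h = "(*) w", symmetric, OF f_algebra_mult_inf_left[OF F w] G(1,2)])
  also have "\<dots> \<le> w * (g + \<epsilon> *\<^sub>R z)" by (rule f_algebra_mult_left_mono[OF F w le])
  also have "\<dots> = w * g + \<epsilon> *\<^sub>R (w * z)" by (simp add: distrib_left)
  finally show "\<exists>G'. finite G' \<and> G' \<noteq> {} \<and> G' \<subseteq> (*) w ` S \<and> Inf_fin G' \<le> w * g + \<epsilon> *\<^sub>R (w * z)"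
    using G by blast
qed

text \<open>For t > 0, the pair (t, t powr (s / (s - 1))) runs through the solutions of
  t1 powr s * t2 powr (1 - s) = 1, so the infimum of frac_pow_set s x is the power x^s of the
  paper for 0 < s < 1.\<close>
definition frac_pow_term :: "real \<Rightarrow> 'e::real_algebra_1 \<Rightarrow> real \<Rightarrow> 'e" where
  "frac_pow_term s x t = (s * t) *\<^sub>R x + ((1 - s) * t powr (s / (s - 1))) *\<^sub>R 1"

definition frac_pow_set :: "real \<Rightarrow> 'e::real_algebra_1 \<Rightarrow> 'e set" where
  "frac_pow_set s x = frac_pow_term s x ` {0<..}"

lemma frac_pow_set_zero: "frac_pow_set 0 x = {1}"
proof -
  have "frac_pow_term 0 x t = 1" if "0 < t" for t using that by (simp add: frac_pow_term_def)
  then show ?thesis unfolding frac_pow_set_def by (auto intro!: image_eqI[of 1 _ 1])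
qed

lemma weighted_geometric_mean_eq_1_iff:
  fixes s t1 t2 :: real
  assumes s: "0 < s" "s < 1" and t: "0 < t1" "0 < t2"
  shows "t1 powr s * t2 powr (1 - s) = 1 \<longleftrightarrow> t2 = t1 powr (s / (s - 1))"
proof
  assume "t1 powr s * t2 powr (1 - s) = 1"
  then have "t2 powr (1 - s) = t1 powr (- s)"
    using t by (simp add: powr_minus field_simps)
  then have "(t2 powr (1 - s)) powr (1 / (1 - s)) = t1 powr (- s / (1 - s))"
    using t by (simp add: powr_powr)
  moreover have "- s / (1 - s) = s / (s - 1)" using s by (simp add: field_simps)
  ultimately show "t2 = t1 powr (s / (s - 1))"
    using s t by (simp add: powr_powr)
next
  assume "t2 = t1 powr (s / (s - 1))"
  moreover have "s / (s - 1) * (1 - s) = - s" using s by (simp add: field_simps)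
  ultimately have "t2 powr (1 - s) = t1 powr (- s)"
    by (simp add: powr_powr)
  then show "t1 powr s * t2 powr (1 - s) = 1"
    using t by (simp add: powr_minus)
qed

lemma powr_neg_grid:
  fixes a \<epsilon> :: real
  assumes a: "a < 0" and \<epsilon>: "0 < \<epsilon>"
  obtains N :: nat where
    "\<And>t. 0 < t \<Longrightarrow> \<exists>k\<le>N. real (Suc k) * \<epsilon> \<le> t + \<epsilon> \<and> (real (Suc k) * \<epsilon>) powr a \<le> t powr a + \<epsilon>"
proof
  define M where "M = \<epsilon> powr (1 / a)"
  define N where "N = nat \<lceil>M / \<epsilon>\<rceil>"
  have M: "0 < M" "M powr a = \<epsilon>" using a \<epsilon> by (simp_all add: M_def powr_powr)
  have "M / \<epsilon> \<le> real N" unfolding N_def by (rule real_nat_ceiling_ge)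
  then have MN: "M \<le> real (Suc N) * \<epsilon>" using \<epsilon> by (simp add: field_simps)
  fix t :: real assume t: "0 < t"
  show "\<exists>k\<le>N. real (Suc k) * \<epsilon> \<le> t + \<epsilon> \<and> (real (Suc k) * \<epsilon>) powr a \<le> t powr a + \<epsilon>"
  proof (cases "t \<le> real (Suc N) * \<epsilon>")
    case True
    define k where "k = nat \<lceil>t / \<epsilon>\<rceil> - 1"
    have pos: "0 < t / \<epsilon>" using t \<epsilon> by simp
    have k: "real (Suc k) = of_int \<lceil>t / \<epsilon>\<rceil>" unfolding k_def using pos by linarith
    have "t / \<epsilon> \<le> real (Suc k)" and "real (Suc k) < t / \<epsilon> + 1" unfolding k by linarith+
    then have up: "t \<le> real (Suc k) * \<epsilon>" and close: "real (Suc k) * \<epsilon> \<le> t + \<epsilon>"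
      using \<epsilon> by (simp_all add: field_simps)
    have "t / \<epsilon> \<le> real (Suc N)" using True \<epsilon> by (simp add: field_simps)
    then have "k \<le> N" using k by linarith
    moreover have "(real (Suc k) * \<epsilon>) powr a \<le> t powr a" using powr_mono2'[OF _ t up] a by simp
    ultimately show ?thesis using close \<epsilon> by force
  next
    case False
    have "(real (Suc N) * \<epsilon>) powr a \<le> \<epsilon>" using powr_mono2'[of a, OF _ M(1) MN] a M(2) by simp
    then have "(real (Suc N) * \<epsilon>) powr a \<le> t powr a + \<epsilon>" by (rule add_increasing[OF powr_ge_zero])
    then show ?thesis using False \<epsilon> by (intro exI[of _ N]) simp
  qed
qed

lemma frac_pow_term_le_add:
  fixes x :: "'e::{real_algebra_1, lattice_ab_group_add, ordered_real_vector}"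
  assumes s: "0 < s" "s < 1" and x: "0 \<le> x" and one: "0 \<le> (1::'e)" and \<epsilon>: "0 \<le> \<epsilon>"
    and le1: "t' \<le> t + \<epsilon>" and le2: "t' powr (s / (s - 1)) \<le> t powr (s / (s - 1)) + \<epsilon>"
  shows "frac_pow_term s x t' \<le> frac_pow_term s x t + \<epsilon> *\<^sub>R (x + 1)"
proof -
  have "s * t' \<le> s * t + \<epsilon>"
    using mult_left_mono[OF le1, of s] mult_right_mono[of s 1 \<epsilon>] s \<epsilon> by (simp add: distrib_left)
  then have "(s * t') *\<^sub>R x \<le> (s * t + \<epsilon>) *\<^sub>R x" using x by (rule scaleR_right_mono)
  moreover have "(1 - s) * t' powr (s / (s - 1)) \<le> (1 - s) * t powr (s / (s - 1)) + \<epsilon>"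
    using mult_left_mono[OF le2, of "1 - s"] mult_right_mono[of "1 - s" 1 \<epsilon>] s \<epsilon>
    by (simp add: distrib_left)
  then have "((1 - s) * t' powr (s / (s - 1))) *\<^sub>R (1::'e) \<le> ((1 - s) * t powr (s / (s - 1)) + \<epsilon>) *\<^sub>R 1"
    using one by (rule scaleR_right_mono)
  ultimately have "frac_pow_term s x t' \<le> (s * t + \<epsilon>) *\<^sub>R x + ((1 - s) * t powr (s / (s - 1)) + \<epsilon>) *\<^sub>R 1"
    unfolding frac_pow_term_def by (rule add_mono)
  also have "\<dots> = frac_pow_term s x t + \<epsilon> *\<^sub>R (x + 1)"
    by (simp add: frac_pow_term_def scaleR_add_left scaleR_add_right algebra_simps)
  finally show ?thesis .
qed

lemma is_glb_frac_pow_set_imp_approx_Inf_fin: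
  fixes x :: "'e::{real_algebra_1, lattice_ab_group_add, ordered_real_vector}"
  assumes s: "0 < s" "s < 1" and x: "0 \<le> x" and one: "0 \<le> (1::'e)"
    and glb: "is_glb (frac_pow_set s x) g"
  shows "approx_Inf_fin (frac_pow_set s x) g (x + 1)"
  unfolding approx_Inf_fin_def
proof (intro conjI allI impI)
  show "\<forall>y\<in>frac_pow_set s x. g \<le> y" using glb by (simp add: is_glb_def)
  fix \<epsilon> :: real assume \<epsilon>: "0 < \<epsilon>"
  have a: "s / (s - 1) < 0" using s by (simp add: divide_pos_neg)
  obtain N where grid: "\<And>t. 0 < t \<Longrightarrow> \<exists>k\<le>N. real (Suc k) * \<epsilon> \<le> t + \<epsilon> \<and>
      (real (Suc k) * \<epsilon>) powr (s / (s - 1)) \<le> t powr (s / (s - 1)) + \<epsilon>"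
    using powr_neg_grid[OF a \<epsilon>] by blast
  define F where "F = (\<lambda>k. frac_pow_term s x (real (Suc k) * \<epsilon>)) ` {..N}"
  have F: "finite F" "F \<noteq> {}" "F \<subseteq> frac_pow_set s x"
    using \<epsilon> by (auto simp: F_def frac_pow_set_def)
  have "Inf_fin F - \<epsilon> *\<^sub>R (x + 1) \<le> y" if y: "y \<in> frac_pow_set s x" for y
  proof -
    obtain t where t: "0 < t" and y: "y = frac_pow_term s x t"
      using y by (auto simp: frac_pow_set_def)
    obtain k where "k \<le> N" and k: "real (Suc k) * \<epsilon> \<le> t + \<epsilon>"
      "(real (Suc k) * \<epsilon>) powr (s / (s - 1)) \<le> t powr (s / (s - 1)) + \<epsilon>"
      using grid[OF t] by blast
    then have "Inf_fin F \<le> frac_pow_term s x (real (Suc k) * \<epsilon>)"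
      using F(1) by (intro Inf_fin.coboundedI) (auto simp: F_def)
    also have "\<dots> \<le> y + \<epsilon> *\<^sub>R (x + 1)"
      unfolding y using frac_pow_term_le_add[OF s x one _ k] \<epsilon> by simp
    finally show ?thesis by (simp add: diff_le_eq)
  qed
  then have "Inf_fin F - \<epsilon> *\<^sub>R (x + 1) \<le> g" using glb by (simp add: is_glb_def)
  then show "\<exists>F. finite F \<and> F \<noteq> {} \<and> F \<subseteq> frac_pow_set s x \<and> Inf_fin F \<le> g + \<epsilon> *\<^sub>R (x + 1)"
    using F by (auto simp: diff_le_eq)
qed

lemma scaleR_le_sup_uminus:
  fixes x :: "'e::{lattice_ab_group_add, ordered_real_vector}"
  assumes "\<bar>c\<bar> \<le> 1"
  shows "c *\<^sub>R x \<le> sup x (- x)"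
proof -
  have m: "0 \<le> sup x (- x)" by (rule sup_uminus_nonneg)
  show ?thesis
  proof (cases "0 \<le> c")
    case True
    have "c *\<^sub>R x \<le> c *\<^sub>R sup x (- x)" using True by (intro scaleR_left_mono) auto
    also have "\<dots> \<le> 1 *\<^sub>R sup x (- x)" using assms m by (intro scaleR_right_mono) auto
    finally show ?thesis by simp
  next
    case False
    have "c *\<^sub>R x = (- c) *\<^sub>R (- x)" by simp
    also have "\<dots> \<le> (- c) *\<^sub>R sup x (- x)" using False by (intro scaleR_left_mono) auto
    also have "\<dots> \<le> 1 *\<^sub>R sup x (- x)" using assms m False by (intro scaleR_right_mono) auto
    finally show ?thesis by simp
  qed
qed

lemma modA_real: "modA K (x, 0) = (sup x (- x), 0)"
  for x :: "'e::{real_vector, lattice_ab_group_add, ordered_real_vector}"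
proof (cases K)
  case ComplexK
  let ?S = "{cos t *\<^sub>R x + sin t *\<^sub>R (0::'e) | t. 0 \<le> t \<and> t \<le> 2 * pi}"
  have sup: "is_sup_E ?S (sup x (- x))"
    unfolding is_sup_E_def
  proof (intro conjI allI impI ballI)
    fix y assume "y \<in> ?S"
    then show "y \<le> sup x (- x)" by (auto simp: scaleR_le_sup_uminus)
  next
    fix u assume u: "\<forall>y\<in>?S. y \<le> u"
    have "x \<in> ?S" by (rule CollectI, rule exI[of _ 0]) simp
    moreover have "- x \<in> ?S" by (rule CollectI, rule exI[of _ pi]) simp
    ultimately show "sup x (- x) \<le> u" using u by auto
  qed
  have "(THE s. is_sup_E ?S s) = sup x (- x)"
  proof (rule the_equality)
    fix s assume "is_sup_E ?S s"
    with sup show "s = sup x (- x)" unfolding is_sup_E_def by (meson order_antisym)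
  qed (rule sup)
  then show ?thesis using ComplexK by (simp add: modA_def)
qed (simp add: modA_def)

lemma snd_modA [simp]: "snd (modA K f) = 0"
  by (simp add: modA_def)

lemma posA_iff: "z \<in> posA K \<longleftrightarrow> snd z = 0 \<and> 0 \<le> fst z"
  for z :: "'e::{real_vector, lattice_ab_group_add, ordered_real_vector} cpx"
proof (cases z)
  case (Pair x y)
  have "modA K (x, y) = (x, y) \<longleftrightarrow> y = 0 \<and> sup x (- x) = x"
    by (metis modA_real snd_modA fst_conv snd_conv)
  also have "\<dots> \<longleftrightarrow> y = 0 \<and> 0 \<le> x"
    using sup_uminus_nonneg[of x] sup_uminus_eq_self[of x] by metis
  finally show ?thesis using Pair by (auto simp: posA_def inA_def)
qed

lemma leA_iff: "leA K p q \<longleftrightarrow> snd p = snd q \<and> fst p \<le> fst q"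
  for p q :: "'e::{real_vector, lattice_ab_group_add, ordered_real_vector} cpx"
  by (auto simp: leA_def posA_iff subA_def)

lemma smulA_of_real [simp]: "smulA (complex_of_real c) f = (c *\<^sub>R fst f, c *\<^sub>R snd f)"
  by (simp add: smulA_def)

lemma is_infA_unique: "is_infA K S z \<Longrightarrow> is_infA K S z' \<Longrightarrow> z = z'"
  for z :: "'e::{real_vector, lattice_ab_group_add, ordered_real_vector} cpx"
  unfolding is_infA_def leA_iff by (metis order_antisym prod_eq_iff)

lemma infA_eq: "is_infA K S z \<Longrightarrow> infA K S = z"
  for z :: "'e::{real_vector, lattice_ab_group_add, ordered_real_vector} cpx"
  unfolding infA_def using is_infA_unique by blast

lemma is_infA_real_image:
  fixes S :: "'e::{real_vector, lattice_ab_group_add, ordered_real_vector} set"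
  assumes inf: "is_infA K ((\<lambda>y. (y, 0)) ` S) z" and "S \<noteq> {}"
  shows "z = (fst z, 0) \<and> is_glb S (fst z)"
proof -
  obtain y where "y \<in> S" using \<open>S \<noteq> {}\<close> by blast
  then have "leA K z (y, 0)" using inf unfolding is_infA_def by blast
  then have "snd z = 0" by (simp add: leA_iff)
  moreover have "\<forall>y\<in>S. fst z \<le> y" using inf unfolding is_infA_def by (auto simp: leA_iff)
  moreover have "l \<le> fst z" if l: "\<forall>y\<in>S. l \<le> y" for l
  proof -
    have "inA K (l, 0)" by (simp add: inA_def)
    moreover have "\<forall>w\<in>(\<lambda>y. (y, 0)) ` S. leA K (l, 0) w" using l by (auto simp: leA_iff)
    ultimately have "leA K (l, 0) z" using inf unfolding is_infA_def by blast
    then show ?thesis by (simp add: leA_iff)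
  qed
  ultimately show ?thesis by (auto simp: is_glb_def prod_eq_iff)
qed

lemma powA_nat_real: "powA_nat (x, 0) n = (x ^ n, 0)"
  for x :: "'e::real_algebra_1"
  by (induction n) (simp_all add: powA_nat_def unitA_def mulA_def)

lemma powA_real_int:
  "r - of_int \<lfloor>r\<rfloor> = 0 \<Longrightarrow> powA K (x, 0) r = (x ^ nat \<lfloor>r\<rfloor>, 0)"
  by (simp add: powA_def Let_def powA_nat_real mulA_def unitA_def)

lemma frac_pow_set_eq:
  assumes "0 < s" "s < 1"
  shows "frac_pow_set s x = {(s * t1) *\<^sub>R x + ((1 - s) * t2) *\<^sub>R 1 | t1 t2.
           0 < t1 \<and> 0 < t2 \<and> t1 powr s * t2 powr (1 - s) = 1}"
  unfolding frac_pow_set_def frac_pow_term_def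
  using weighted_geometric_mean_eq_1_iff[OF assms] by force

lemma wgm_closed_frac_pow_set_inf:
  fixes x :: "'e::{real_algebra_1, lattice_ab_group_add, ordered_real_vector}"
  assumes W: "wgm_closed K TYPE('e)" and one: "0 \<le> (1::'e)" and x: "0 \<le> x"
    and s: "0 < s" "s < 1"
  obtains g where "is_infA K ((\<lambda>y. (y, 0)) ` frac_pow_set s x) (g, 0)"
    and "is_glb (frac_pow_set s x) g"
proof -
  let ?P = "(\<lambda>y. (y, 0)) ` frac_pow_set s x"
  define f :: "nat \<Rightarrow> 'e cpx" where "f = (\<lambda>k. if k = 0 then (x, 0) else unitA)"
  define w :: "nat \<Rightarrow> real" where "w = (\<lambda>k. if k = 0 then s else 1 - s)"
  have sum_eq: "sumA (\<lambda>k. smulA (complex_of_real (w k * \<theta> k)) (modA K (f k))) 2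
      = ((s * \<theta> 0) *\<^sub>R x + ((1 - s) * \<theta> 1) *\<^sub>R 1, 0)" for \<theta>
    using x one by (simp only: smulA_of_real)
      (simp add: sumA_def numeral_2_eq_2 w_def f_def modA_real sup_uminus_eq_self unitA_def)
  have weights_eq: "(\<forall>k<2. 0 < \<theta> k) \<and> (\<Prod>k<2. \<theta> k powr w k) = 1 \<longleftrightarrow>
      0 < \<theta> 0 \<and> 0 < \<theta> 1 \<and> \<theta> 0 powr s * \<theta> 1 powr (1 - s) = 1" for \<theta>
    by (auto simp: numeral_2_eq_2 w_def less_Suc_eq)
  have wgm_set: "{sumA (\<lambda>k. smulA (complex_of_real (w k * \<theta> k)) (modA K (f k))) 2 | \<theta>.
      (\<forall>k<2. 0 < \<theta> k) \<and> (\<Prod>k<2. \<theta> k powr w k) = 1} = ?P"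
    unfolding sum_eq weights_eq frac_pow_set_eq[OF s]
    apply auto
    subgoal for t1 t2 by (rule exI[of _ "\<lambda>k. if k = 0 then t1 else t2"]) simp
    done
  have "(\<forall>k<2. inA K (f k)) \<and> (\<forall>k<2. 0 < w k \<and> w k < 1) \<and> (\<Sum>k<2. w k) = 1"
    using s by (auto simp: f_def w_def inA_def unitA_def numeral_2_eq_2)
  then obtain z where "is_infA K ?P z"
    using W[unfolded wgm_closed_def, rule_format, of 2 f w] unfolding wgm_set by blast
  moreover have "frac_pow_set s x \<noteq> {}" by (auto simp: frac_pow_set_def)
  ultimately show ?thesis using that is_infA_real_image by metis
qed

lemma powA_real_frac:
  fixes x :: "'e::{real_algebra_1, lattice_ab_group_add, ordered_real_vector}"
  assumes W: "wgm_closed K TYPE('e)" and one: "0 \<le> (1::'e)" and x: "0 \<le> x"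
    and r: "r - of_int \<lfloor>r\<rfloor> \<noteq> 0"
  obtains g where "is_glb (frac_pow_set (r - of_int \<lfloor>r\<rfloor>) x) g"
    and "powA K (x, 0) r = (x ^ nat \<lfloor>r\<rfloor> * g, 0)"
proof -
  define s where "s = r - of_int \<lfloor>r\<rfloor>"
  have s: "0 < s" "s < 1" using r unfolding s_def by (linarith, linarith)
  let ?P = "(\<lambda>y. (y, 0)) ` frac_pow_set s x"
  obtain g where inf: "is_infA K ?P (g, 0)" and glb: "is_glb (frac_pow_set s x) g"
    by (rule wgm_closed_frac_pow_set_inf[OF W one x s])
  have pow_set: "{addA (smulA (complex_of_real (s * \<theta>1)) (x, 0)) (smulA (complex_of_real ((1 - s) * \<theta>2)) unitA)
      | \<theta>1 \<theta>2. 0 < \<theta>1 \<and> 0 < \<theta>2 \<and> \<theta>1 powr s * \<theta>2 powr (1 - s) = 1} = ?P"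
    unfolding frac_pow_set_eq[OF s] smulA_of_real by (auto simp: addA_def unitA_def)
  have "powA K (x, 0) r = mulA (powA_nat (x, 0) (nat \<lfloor>r\<rfloor>)) (infA K ?P)"
    using r unfolding powA_def Let_def s_def[symmetric] pow_set by (simp add: s_def)
  also have "\<dots> = (x ^ nat \<lfloor>r\<rfloor> * g, 0)"
    by (simp add: infA_eq[OF inf] powA_nat_real mulA_def)
  finally show ?thesis using that glb unfolding s_def by blast
qed

lemma powA_real_approx_Inf_fin:
  fixes x :: "'e::{real_algebra_1, lattice_ab_group_add, ordered_real_vector}"
  assumes F: "archimedean_f_algebra TYPE('e)" and W: "wgm_closed K TYPE('e)" and x: "0 \<le> x"
  obtains h where "powA K (x, 0) r = (h, 0)"
    and "approx_Inf_fin ((*) (x ^ nat \<lfloor>r\<rfloor>) ` frac_pow_set (r - of_int \<lfloor>r\<rfloor>) x) h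
           (x ^ nat \<lfloor>r\<rfloor> * (x + 1))"
proof (cases "r - of_int \<lfloor>r\<rfloor> = 0")
  case True
  let ?w = "x ^ nat \<lfloor>r\<rfloor>"
  have "frac_pow_set (r - of_int \<lfloor>r\<rfloor>) x = {1}" unfolding True by (rule frac_pow_set_zero)
  moreover have "0 \<le> ?w * (x + 1)"
    using f_algebra_mult_nonneg[OF F f_algebra_power_nonneg[OF F x]] x f_algebra_one_nonneg[OF F]
    by simp
  then have "approx_Inf_fin {?w} ?w (?w * (x + 1))"
    unfolding approx_Inf_fin_def by (auto intro!: exI[of _ "{?w}"] scaleR_nonneg_nonneg)
  ultimately show ?thesis using that[OF powA_real_int[OF True]] by simp
next
  case False
  define s where "s = r - of_int \<lfloor>r\<rfloor>"
  have s: "0 < s" "s < 1" using False unfolding s_def by (linarith, linarith)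
  obtain g where g: "is_glb (frac_pow_set s x) g" and pow: "powA K (x, 0) r = (x ^ nat \<lfloor>r\<rfloor> * g, 0)"
    using powA_real_frac[OF W f_algebra_one_nonneg[OF F] x False] unfolding s_def by blast
  show ?thesis
    using that[OF pow] approx_Inf_fin_mult_left[OF F f_algebra_power_nonneg[OF F x]
        is_glb_frac_pow_set_imp_approx_Inf_fin[OF s x f_algebra_one_nonneg[OF F] g]]
    unfolding s_def by blast
qed

definition re_map :: "('a::zero cpx \<Rightarrow> 'b cpx) \<Rightarrow> 'a \<Rightarrow> 'b" where
  "re_map T x = fst (T (x, 0))"

lemma of_real_in_scalars: "complex_of_real c \<in> scalars K"
  by (cases K) (auto simp: scalars_def)

context
  fixes K :: scalar_field
    and C :: "'a::{real_algebra_1, lattice_ab_group_add, ordered_real_vector} cpx set"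
    and T :: "'a cpx \<Rightarrow> 'b::{real_algebra_1, lattice_ab_group_add, ordered_real_vector} cpx"
  assumes C: "Phi_subalgebra K C" and T: "mult_vl_hom K C T" and T_unit: "T unitA = unitA"
begin

lemma real_zero_in_C: "(0, 0) \<in> C"
  using C by (simp add: Phi_subalgebra_def)

lemma real_one_in_C: "(1, 0) \<in> C"
  using C by (simp add: Phi_subalgebra_def unitA_def)

lemma real_add_in_C:
  assumes "(p, 0) \<in> C" "(q, 0) \<in> C" shows "(p + q, 0) \<in> C"
proof -
  have "addA (p, 0) (q, 0) \<in> C" using C assms unfolding Phi_subalgebra_def by blast
  then show ?thesis by (simp add: addA_def)
qed

lemma real_scaleR_in_C:
  assumes "(p, 0) \<in> C" shows "(c *\<^sub>R p, 0) \<in> C"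
proof -
  have "smulA (complex_of_real c) (p, 0) \<in> C"
    using C assms of_real_in_scalars unfolding Phi_subalgebra_def by blast
  then show ?thesis by simp
qed

lemma real_mult_in_C:
  assumes "(p, 0) \<in> C" "(q, 0) \<in> C" shows "(p * q, 0) \<in> C"
proof -
  have "mulA (p, 0) (q, 0) \<in> C" using C assms unfolding Phi_subalgebra_def by blast
  then show ?thesis by (simp add: mulA_def)
qed

lemma real_sup_in_C: "(p, 0) \<in> C \<Longrightarrow> (q, 0) \<in> C \<Longrightarrow> (sup p q, 0) \<in> C"
  using C unfolding Phi_subalgebra_def by blast

lemma real_inf_in_C: "(p, 0) \<in> C \<Longrightarrow> (q, 0) \<in> C \<Longrightarrow> (inf p q, 0) \<in> C"
  using C unfolding Phi_subalgebra_def by blast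

lemma real_diff_in_C: "(p, 0) \<in> C \<Longrightarrow> (q, 0) \<in> C \<Longrightarrow> (p - q, 0) \<in> C"
  using real_add_in_C[of p "(-1) *\<^sub>R q"] real_scaleR_in_C[of q "-1"] by simp

lemma real_power_in_C: "(x, 0) \<in> C \<Longrightarrow> (x ^ n, 0) \<in> C"
  by (induction n) (simp_all add: real_one_in_C real_mult_in_C)

lemma T_add_real:
  assumes "(p, 0) \<in> C" "(q, 0) \<in> C" shows "T (p + q, 0) = addA (T (p, 0)) (T (q, 0))"
proof -
  have "T (addA (p, 0) (q, 0)) = addA (T (p, 0)) (T (q, 0))"
    using T assms unfolding mult_vl_hom_def by blast
  then show ?thesis by (simp add: addA_def)
qed

lemma T_scaleR_real:
  assumes "(p, 0) \<in> C" shows "T (c *\<^sub>R p, 0) = smulA (complex_of_real c) (T (p, 0))"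
proof -
  have "T (smulA (complex_of_real c) (p, 0)) = smulA (complex_of_real c) (T (p, 0))"
    using T assms of_real_in_scalars unfolding mult_vl_hom_def by blast
  then show ?thesis by simp
qed

lemma T_mult_real:
  assumes "(p, 0) \<in> C" "(q, 0) \<in> C" shows "T (p * q, 0) = mulA (T (p, 0)) (T (q, 0))"
proof -
  have "T (mulA (p, 0) (q, 0)) = mulA (T (p, 0)) (T (q, 0))"
    using T assms unfolding mult_vl_hom_def by blast
  then show ?thesis by (simp add: mulA_def)
qed

lemma T_sup_uminus_real:
  assumes "(p, 0) \<in> C" shows "T (sup p (- p), 0) = modA K (T (p, 0))"
proof -
  have "modA K (T (p, 0)) = T (modA K (p, 0))" using T assms unfolding mult_vl_hom_def by blast
  then show ?thesis by (simp add: modA_real)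
qed

text \<open>T maps real elements to real elements: positive ones because T commutes with the
  modulus, whose imaginary part vanishes, and all others via z = sup z 0 + inf z 0.\<close>
lemma T_real: "(z, 0) \<in> C \<Longrightarrow> T (z, 0) = (re_map T z, 0)"
proof -
  have pos: "snd (T (w, 0)) = 0" if "(w, 0) \<in> C" "0 \<le> w" for w
    using T_sup_uminus_real[OF that(1)] sup_uminus_eq_self[OF that(2)] by (metis snd_modA)
  assume z: "(z, 0) \<in> C"
  have p: "(sup z 0, 0) \<in> C" and n: "(- inf z 0, 0) \<in> C"
    using real_sup_in_C[OF z real_zero_in_C] real_diff_in_C[OF real_zero_in_C real_inf_in_C[OF z real_zero_in_C]]
    by simp_all
  have "T (inf z 0, 0) = smulA (complex_of_real (-1)) (T (- inf z 0, 0))"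
    using T_scaleR_real[OF n, of "-1"] by simp
  then have "snd (T (inf z 0, 0)) = 0" using pos[OF n] by (simp add: smulA_def)
  moreover have "T (z, 0) = addA (T (sup z 0, 0)) (T (inf z 0, 0))"
    using T_add_real[OF p real_inf_in_C[OF z real_zero_in_C]] prts[of z] by (simp add: pprt_def nprt_def)
  ultimately have "snd (T (z, 0)) = 0" using pos[OF p] by (simp add: addA_def)
  then show ?thesis by (simp add: re_map_def prod_eq_iff)
qed

lemma re_map_add: "(p, 0) \<in> C \<Longrightarrow> (q, 0) \<in> C \<Longrightarrow> re_map T (p + q) = re_map T p + re_map T q"
  using T_add_real by (simp add: re_map_def addA_def)

lemma re_map_scaleR: "(p, 0) \<in> C \<Longrightarrow> re_map T (c *\<^sub>R p) = c *\<^sub>R re_map T p"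
  using T_scaleR_real by (simp add: re_map_def)

lemma re_map_diff: "(p, 0) \<in> C \<Longrightarrow> (q, 0) \<in> C \<Longrightarrow> re_map T (p - q) = re_map T p - re_map T q"
  using re_map_add[of p "(-1) *\<^sub>R q"] re_map_scaleR[of q "-1"] real_scaleR_in_C[of q "-1"] by simp

lemma re_map_mult: "(p, 0) \<in> C \<Longrightarrow> (q, 0) \<in> C \<Longrightarrow> re_map T (p * q) = re_map T p * re_map T q"
  using T_mult_real[of p q] T_real[of p] T_real[of q] unfolding re_map_def[of T "p * q"] by (simp add: mulA_def)

lemma re_map_one: "re_map T 1 = 1"
  using T_unit by (simp add: re_map_def unitA_def)

lemma re_map_power: "(x, 0) \<in> C \<Longrightarrow> re_map T (x ^ n) = re_map T x ^ n"
  by (induction n) (simp_all add: re_map_one re_map_mult real_power_in_C)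

lemma re_map_sup_uminus: "(p, 0) \<in> C \<Longrightarrow> re_map T (sup p (- p)) = sup (re_map T p) (- re_map T p)"
  using T_sup_uminus_real[of p] T_real[of p] unfolding re_map_def[of T "sup p (- p)"] by (simp add: modA_real)

lemma re_map_sup_zero: "(p, 0) \<in> C \<Longrightarrow> re_map T (sup p 0) = sup (re_map T p) 0"
proof -
  assume p: "(p, 0) \<in> C"
  have s: "(sup p 0, 0) \<in> C" by (rule real_sup_in_C[OF p real_zero_in_C])
  have a: "(sup p (- p), 0) \<in> C" using real_sup_in_C[OF p real_diff_in_C[OF real_zero_in_C p]] by simp
  have "re_map T (sup p 0) + re_map T (sup p 0) = re_map T (p + sup p (- p))"
    by (simp only: re_map_add[OF s s, symmetric] sup_zero_add_sup_zero)
  also have "\<dots> = sup (re_map T p) 0 + sup (re_map T p) 0"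
    by (simp only: re_map_add[OF p a] re_map_sup_uminus[OF p] sup_zero_add_sup_zero)
  finally show ?thesis by (rule add_self_eq_add_self_imp_eq)
qed

lemma re_map_inf:
  assumes p: "(p, 0) \<in> C" and q: "(q, 0) \<in> C"
  shows "re_map T (inf p q) = inf (re_map T p) (re_map T q)"
proof -
  have d: "(p - q, 0) \<in> C" by (rule real_diff_in_C[OF p q])
  have "re_map T (inf p q) = re_map T (p - sup (p - q) 0)" by (simp only: inf_eq_minus_sup_diff_zero)
  also have "\<dots> = re_map T p - sup (re_map T p - re_map T q) 0"
    by (simp only: re_map_diff[OF p real_sup_in_C[OF d real_zero_in_C]] re_map_sup_zero[OF d] re_map_diff[OF p q])
  also have "\<dots> = inf (re_map T p) (re_map T q)" by (simp only: inf_eq_minus_sup_diff_zero)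
  finally show ?thesis .
qed

lemma re_map_mono:
  assumes p: "(p, 0) \<in> C" and q: "(q, 0) \<in> C" and le: "p \<le> q"
  shows "re_map T p \<le> re_map T q"
proof -
  have "re_map T q - re_map T p = re_map T (sup (q - p) 0)"
    using le by (simp add: re_map_diff[OF q p] sup_absorb1)
  also have "\<dots> = sup (re_map T q - re_map T p) 0" by (simp only: re_map_sup_zero[OF real_diff_in_C[OF q p]] re_map_diff[OF q p])
  finally have "0 \<le> re_map T q - re_map T p" by (metis sup_ge2)
  then show ?thesis by simp
qed

lemma Inf_fin_re_map:
  assumes "finite F" "F \<noteq> {}" "\<And>p. p \<in> F \<Longrightarrow> (p, 0) \<in> C"
  shows "(Inf_fin F, 0) \<in> C \<and> re_map T (Inf_fin F) = Inf_fin (re_map T ` F)"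
  using assms by (induction F rule: finite_ne_induct) (simp_all add: real_inf_in_C re_map_inf)

lemma approx_Inf_fin_re_map:
  assumes S: "\<And>p. p \<in> S \<Longrightarrow> (p, 0) \<in> C" and g: "(g, 0) \<in> C" and z: "(z, 0) \<in> C"
    and approx: "approx_Inf_fin S g z"
  shows "approx_Inf_fin (re_map T ` S) (re_map T g) (re_map T z)"
  unfolding approx_Inf_fin_def
proof (intro conjI allI impI)
  show "\<forall>y\<in>re_map T ` S. re_map T g \<le> y"
    using approx S g by (auto simp: approx_Inf_fin_def intro: re_map_mono)
  fix \<epsilon> :: real assume "0 < \<epsilon>"
  with approx obtain F where F: "finite F" "F \<noteq> {}" "F \<subseteq> S" and le: "Inf_fin F \<le> g + \<epsilon> *\<^sub>R z"
    by (rule approx_Inf_finE)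
  have FC: "(Inf_fin F, 0) \<in> C" and "re_map T (Inf_fin F) = Inf_fin (re_map T ` F)"
    using Inf_fin_re_map[OF F(1,2)] F(3) S by auto
  then have "Inf_fin (re_map T ` F) \<le> re_map T (g + \<epsilon> *\<^sub>R z)"
    using re_map_mono[OF FC _ le] real_add_in_C[OF g real_scaleR_in_C[OF z]] by simp
  then show "\<exists>G. finite G \<and> G \<noteq> {} \<and> G \<subseteq> re_map T ` S \<and> Inf_fin G \<le> re_map T g + \<epsilon> *\<^sub>R re_map T z"
    using F re_map_add[OF g real_scaleR_in_C[OF z]] re_map_scaleR[OF z] by (auto intro!: exI[of _ "re_map T ` F"])
qed

lemma frac_pow_term_in_C: "(x, 0) \<in> C \<Longrightarrow> (frac_pow_term s x t, 0) \<in> C"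
  unfolding frac_pow_term_def by (simp add: real_add_in_C real_scaleR_in_C real_one_in_C)

lemma re_map_frac_pow_term: "(x, 0) \<in> C \<Longrightarrow> re_map T (frac_pow_term s x t) = frac_pow_term s (re_map T x) t"
  unfolding frac_pow_term_def
  by (simp add: re_map_add re_map_scaleR re_map_one real_scaleR_in_C real_one_in_C)

lemma approx_Inf_fin_re_map_frac_pow:
  assumes x: "(x, 0) \<in> C" and h: "(h, 0) \<in> C"
    and approx: "approx_Inf_fin ((*) (x ^ n) ` frac_pow_set s x) h (x ^ n * (x + 1))"
  shows "approx_Inf_fin ((*) (re_map T x ^ n) ` frac_pow_set s (re_map T x)) (re_map T h)
           (re_map T x ^ n * (re_map T x + 1))"
proof -
  have xn: "(x ^ n, 0) \<in> C" by (rule real_power_in_C[OF x])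
  have mem: "(x ^ n * frac_pow_term s x t, 0) \<in> C" for t
    by (rule real_mult_in_C[OF xn frac_pow_term_in_C[OF x]])
  have "re_map T ` (*) (x ^ n) ` frac_pow_set s x = (*) (re_map T x ^ n) ` frac_pow_set s (re_map T x)"
    unfolding frac_pow_set_def image_image
    by (rule image_cong) (simp_all add: re_map_mult[OF xn frac_pow_term_in_C[OF x]] re_map_power[OF x] re_map_frac_pow_term[OF x])
  moreover have "(x ^ n * (x + 1), 0) \<in> C"
    by (rule real_mult_in_C[OF xn real_add_in_C[OF x real_one_in_C]])
  moreover have "re_map T (x ^ n * (x + 1)) = re_map T x ^ n * (re_map T x + 1)"
    by (simp add: re_map_mult[OF xn real_add_in_C[OF x real_one_in_C]] re_map_power[OF x] re_map_add[OF x real_one_in_C] re_map_one)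
  ultimately show ?thesis
    using approx_Inf_fin_re_map[OF _ h _ approx] mem by (auto simp: frac_pow_set_def)
qed

end

theorem corollary4p4:
  fixes K :: scalar_field
    and C :: "'a::{real_algebra_1, lattice_ab_group_add, ordered_real_vector} cpx set"
    and T :: "'a cpx \<Rightarrow> 'b::{real_algebra_1, lattice_ab_group_add, ordered_real_vector} cpx"
    and a :: "'a cpx" and r :: real
  assumes "Phi_algebra K TYPE('a)" and "wgm_closed K TYPE('a)"
    and "Phi_algebra K TYPE('b)" and "wgm_closed K TYPE('b)"
    and "Phi_subalgebra K C"
    and "mult_vl_hom K C T" and "T unitA = unitA"
    and "a \<in> posA K" and "0 < r"
    and "a \<in> C" and "powA K a r \<in> C"
  shows "T (powA K a r) = powA K (T a) r"
proof -
  note hom = assms(5-7)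
  have FA: "archimedean_f_algebra TYPE('a)" and FB: "archimedean_f_algebra TYPE('b)"
    using assms(1,3) by (simp_all add: Phi_algebra_imp_archimedean_f_algebra)
  obtain x where a: "a = (x, 0)" and x: "0 \<le> x" using assms(8) by (cases a) (auto simp: posA_iff)
  have xC: "(x, 0) \<in> C" using assms(10) a by simp
  define y where "y = re_map T x"
  have Ta: "T a = (y, 0)" unfolding a y_def by (rule T_real[OF hom xC])
  have y: "0 \<le> y" using re_map_sup_uminus[OF hom xC] sup_uminus_eq_self[OF x] sup_uminus_nonneg[of y]
    unfolding y_def by simp
  obtain hA where pA: "powA K a r = (hA, 0)" and approx_A:
    "approx_Inf_fin ((*) (x ^ nat \<lfloor>r\<rfloor>) ` frac_pow_set (r - of_int \<lfloor>r\<rfloor>) x) hA (x ^ nat \<lfloor>r\<rfloor> * (x + 1))"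
    unfolding a by (rule powA_real_approx_Inf_fin[OF FA assms(2) x])
  obtain hB where pB: "powA K (T a) r = (hB, 0)" and approx_B:
    "approx_Inf_fin ((*) (y ^ nat \<lfloor>r\<rfloor>) ` frac_pow_set (r - of_int \<lfloor>r\<rfloor>) y) hB (y ^ nat \<lfloor>r\<rfloor> * (y + 1))"
    unfolding Ta by (rule powA_real_approx_Inf_fin[OF FB assms(4) y])
  have hC: "(hA, 0) \<in> C" using assms(11) pA by simp
  have "re_map T hA = hB"
    using approx_Inf_fin_imp_is_glb[OF FB approx_Inf_fin_re_map_frac_pow[OF hom xC hC approx_A]]
      approx_Inf_fin_imp_is_glb[OF FB approx_B]
    unfolding y_def by (rule is_glb_unique)
  then show ?thesis using T_real[OF hom hC] pA pB by simp
qed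

end
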